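(* Let $N\ge1$, $Y=(y_1,\dots,y_N)$ distinct points of $\mathbb{R}^3$, $\alpha\in\mathbb{R}^N$, and for $\mu\ge0$ let $\Gamma_{\alpha,Y}(\mu)$ be the $N\times N$ matrix with entries $[\Gamma_{\alpha,Y}(\mu)]_{jj}=\alpha_j-\frac{i\mu}{4\pi}$ and $[\Gamma_{\alpha,Y}(\mu)]_{j\ell}=-\frac{e^{i\mu|y_j-y_\ell|}}{4\pi|y_j-y_\ell|}$ for $j\neq\ell$. Assume $\Gamma_{\alpha,Y}(\mu)$ is invertible for all $\mu\in[0,+\infty)$ with locally bounded inverse, and let $c_{j\ell}(\mu)=[\Gamma_{\alpha,Y}(\mu)^{-1}]_{j\ell}$. Then, with $\langle\mu\rangle=(1+\mu^2)^{1/2}$: (i) the $c_{j\ell}$ are holomorphic in a neighbourhood of $[0,+\infty)$ and satisfy, for $\mu\ge0$, $|c_{j\ell}(\mu)|\le C\langle\mu\rangle^{-1}$, $|c'_{j\ell}(\mu)|\le C\langle\mu\rangle^{-2}$, $|c''_{j\ell}(\mu)|\le C\langle\mu\rangle^{-2}$; (ii) one can write $c_{j\ell}(\mu)=4\pi i\,\delta_{j\ell}\langle\mu\rangle^{-1}+d_{j\ell}(\mu)$ and also $c_{j\ell}(\mu)=4\pi i\,\delta_{j\ell}\,\mu\langle\mu\rangle^{-2}+\tilde d_{j\ell}(\mu)$, where $d_{j\ell},\tilde d_{j\ell}$ are holomorphic near $[0,\infty)$ and satisfy $|d_{j\ell}|+|d'_{j\ell}|+|d''_{j\ell}|\le C\langle\mu\rangle^{-2}$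 and $|\tilde d_{j\ell}|+|\tilde d'_{j\ell}|+|\tilde d''_{j\ell}|\le C\langle\mu\rangle^{-2}$ for $\mu\ge0$.
   Context: $\delta_{j\ell}$ is the Kronecker delta; primes denote derivatives in $\mu$; $C$ denotes constants independent of $\mu$. *)

theory Defs
  imports "HOL-Analysis.Analysis"
begin

text \<open>The matrix Gamma_{alpha,Y}(z), written for complex spectral parameter z
  (its entries are entire in z); the index set of the points is a finite type 'n,
  so N = CARD('n) >= 1.\<close>
definition Gamma_mat :: "('n::finite \<Rightarrow> real) \<Rightarrow> ('n \<Rightarrow> real^3) \<Rightarrow> complex \<Rightarrow> complex^'n^'n" where
  "Gamma_mat \<alpha> y z = (\<chi> j l. if j = l
      then complex_of_real (\<alpha> j) - \<i> * z / (4 * complex_of_real pi)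
      else - exp (\<i> * z * complex_of_real (dist (y j) (y l)))
             / (4 * complex_of_real pi * complex_of_real (dist (y j) (y l))))"

definition cinv :: "('n::finite \<Rightarrow> real) \<Rightarrow> ('n \<Rightarrow> real^3) \<Rightarrow> 'n \<Rightarrow> 'n \<Rightarrow> complex \<Rightarrow> complex" where
  "cinv \<alpha> y j l z = matrix_inv (Gamma_mat \<alpha> y z) $ j $ l"

definition jbr :: "real \<Rightarrow> real" where
  "jbr \<mu> = sqrt (1 + \<mu>^2)"

definition holo_near_halfline :: "(complex \<Rightarrow> complex) \<Rightarrow> bool" where
  "holo_near_halfline f \<longleftrightarrow> (\<exists>S. open S \<and> complex_of_real ` {0..} \<subseteq> S \<and> f holomorphic_on S)"

end

theory Submission
  imports Defs "HOL-Complex_Analysis.Cauchy_Integral_Formula"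
begin

(* Write Gamma(z) = -(i z / 4 pi) I + K(z). On the strip |Im z| <= 1 the l1 norm of K(z) is bounded
   by a constant M, so for |z| >= 8 pi M the scalar part dominates and
   c_jl(z) = 4 pi i delta_jl / z + O(|z|^-2) there. Both models 4 pi i / sqrt(1 + z^2) and
   4 pi i z / (1 + z^2) are within O(|z|^-2) of 4 pi i / z, so each d_jl is O(mu^-2) on the unit
   disc around a large real mu, and Cauchy's estimates pass this bound on to d' and d''. For c_jl
   itself one adds back 4 pi i delta_jl / z, whose derivatives decay like mu^-2 and mu^-3.
   On a bounded piece [0, R] of the half-line everything is bounded, because by Cramer's rule
   c_jl is holomorphic on the open set where Gamma is invertible. *)

section \<open>Perturbations of scalar matrices\<close>

lemma matrix_vector_mult_mat: "mat a *v x = a *s (x :: 'a::semiring_1^'n::finite)"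
  by (simp add: vec_eq_iff matrix_vector_mult_def mat_def if_distrib[of "\<lambda>t. t * _"] cong: if_cong)

lemma l1_norm_matrix_vector_mult_le:
  fixes K :: "'a::real_normed_field^'n::finite^'m::finite"
  shows "(\<Sum>i\<in>UNIV. norm ((K *v x) $ i))
           \<le> (\<Sum>i\<in>UNIV. \<Sum>k\<in>UNIV. norm (K $ i $ k)) * (\<Sum>k\<in>UNIV. norm (x $ k))"
proof -
  have "norm ((K *v x) $ i) \<le> (\<Sum>k\<in>UNIV. norm (K $ i $ k)) * (\<Sum>k\<in>UNIV. norm (x $ k))" for i
  proof -
    have "norm ((K *v x) $ i) \<le> (\<Sum>k\<in>UNIV. norm (K $ i $ k * x $ k))"
      unfolding matrix_vector_mult_def by (simp add: norm_sum)
    also have "\<dots> = (\<Sum>k\<in>UNIV. norm (K $ i $ k) * norm (x $ k))"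
      by (simp add: norm_mult)
    also have "\<dots> \<le> (\<Sum>k\<in>UNIV. norm (K $ i $ k) * (\<Sum>k\<in>UNIV. norm (x $ k)))"
      by (intro sum_mono mult_left_mono member_le_sum) auto
    finally show ?thesis by (simp add: sum_distrib_right)
  qed
  then have "(\<Sum>i\<in>UNIV. norm ((K *v x) $ i))
      \<le> (\<Sum>i\<in>UNIV. (\<Sum>k\<in>UNIV. norm (K $ i $ k)) * (\<Sum>k\<in>UNIV. norm (x $ k)))"
    by (rule sum_mono)
  then show ?thesis by (simp add: sum_distrib_right)
qed

lemma l1_norm_solution_scalar_plus_small:
  fixes K :: "'a::real_normed_field^'n::finite^'n"
  assumes "a \<noteq> 0" and small: "(\<Sum>i\<in>UNIV. \<Sum>k\<in>UNIV. norm (K $ i $ k)) \<le> norm a / 2"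
    and eq: "(mat a + K) *v x = b"
  shows "(\<Sum>k\<in>UNIV. norm (x $ k)) \<le> 2 * (\<Sum>k\<in>UNIV. norm (b $ k)) / norm a"
proof -
  let ?nx = "\<Sum>k\<in>UNIV. norm (x $ k)"
  have "a *s x = b - K *v x"
    using eq by (simp add: matrix_vector_mult_mat algebra_simps)
  then have "norm a * ?nx = (\<Sum>k\<in>UNIV. norm (b $ k - (K *v x) $ k))"
    by (simp add: sum_distrib_left vec_eq_iff flip: norm_mult)
  also have "\<dots> \<le> (\<Sum>k\<in>UNIV. norm (b $ k)) + (\<Sum>k\<in>UNIV. norm ((K *v x) $ k))"
    by (simp add: sum.distrib[symmetric] sum_mono norm_triangle_ineq4)
  also have "\<dots> \<le> (\<Sum>k\<in>UNIV. norm (b $ k)) + norm a / 2 * ?nx"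
    using order_trans[OF l1_norm_matrix_vector_mult_le mult_right_mono[OF small]]
    by (simp add: sum_nonneg)
  finally show ?thesis using assms(1) by (simp add: field_simps)
qed

lemma matrix_inv_right:
  fixes A :: "'a::semiring_1^'n::finite^'m::finite"
  assumes "invertible A"
  shows "A ** matrix_inv A = mat 1"
  using someI_ex[OF assms[unfolded invertible_def]] by (simp add: matrix_inv_def)

lemma matrix_inv_scalar_plus_small:
  fixes K :: "'a::real_normed_field^'n::finite^'n"
  assumes "a \<noteq> 0" and small: "(\<Sum>i\<in>UNIV. \<Sum>k\<in>UNIV. norm (K $ i $ k)) \<le> norm a / 2"
  shows "invertible (mat a + K)"
    and "norm (matrix_inv (mat a + K) $ j $ l - mat (inverse a) $ j $ l)
           \<le> 2 * (\<Sum>i\<in>UNIV. \<Sum>k\<in>UNIV. norm (K $ i $ k)) / norm a ^ 2"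
proof -
  let ?s = "\<Sum>i\<in>UNIV. \<Sum>k\<in>UNIV. norm (K $ i $ k)"
  note l1_bound = l1_norm_solution_scalar_plus_small[OF assms]
  have "x = 0" if "(mat a + K) *v x = 0" for x
  proof -
    have "(\<Sum>k\<in>UNIV. norm (x $ k)) = 0"
      using l1_bound[OF that] by (simp add: antisym sum_nonneg)
    then show ?thesis by (simp add: vec_eq_iff sum_nonneg_eq_0_iff)
  qed
  then show inv: "invertible (mat a + K)"
    by (simp add: invertible_left_inverse matrix_left_invertible_ker)
  define x where "x = column l (matrix_inv (mat a + K))"
  define e :: "'a^'n" where "e = column l (mat 1)"
  have Ax: "(mat a + K) *v x = e"
    using matrix_inv_right[OF inv]
    by (simp add: x_def e_def vec_eq_iff column_def matrix_vector_mult_def matrix_matrix_mult_def)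
  have "(\<Sum>k\<in>UNIV. norm (e $ k)) = 1"
    by (simp add: e_def column_def mat_def if_distrib[of norm] cong: if_cong)
  then have nx: "(\<Sum>k\<in>UNIV. norm (x $ k)) \<le> 2 / norm a"
    using l1_bound[OF Ax] by simp
  have "a *s x = e - K *v x"
    using Ax by (simp add: matrix_vector_mult_mat algebra_simps)
  then have "x $ j - mat (inverse a) $ j $ l = - (K *v x) $ j / a"
    using \<open>a \<noteq> 0\<close> by (auto simp: vec_eq_iff e_def column_def mat_def field_simps)
  then have "norm (matrix_inv (mat a + K) $ j $ l - mat (inverse a) $ j $ l) = norm ((K *v x) $ j) / norm a"
    by (simp add: x_def column_def norm_divide)
  also have "\<dots> \<le> ?s * (2 / norm a) / norm a"
  proof (rule divide_right_mono)
    have "norm ((K *v x) $ j) \<le> (\<Sum>i\<in>UNIV. norm ((K *v x) $ i))"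
      by (rule member_le_sum) auto
    also have "\<dots> \<le> ?s * (\<Sum>k\<in>UNIV. norm (x $ k))"
      by (rule l1_norm_matrix_vector_mult_le)
    also have "\<dots> \<le> ?s * (2 / norm a)"
      using nx by (intro mult_left_mono) (auto simp: sum_nonneg)
    finally show "norm ((K *v x) $ j) \<le> ?s * (2 / norm a)" .
  qed simp
  finally show "norm (matrix_inv (mat a + K) $ j $ l - mat (inverse a) $ j $ l) \<le> 2 * ?s / norm a ^ 2"
    by (simp add: power2_eq_square mult.commute)
qed

lemma matrix_inv_entry_cramer:
  fixes A :: "'a::field^'n::finite^'n"
  assumes "det A \<noteq> 0"
  shows "matrix_inv A $ j $ l = det (\<chi> i k. if k = j then mat 1 $ i $ l else A $ i $ k) / det A"
proof -
  have "invertible A" using assms invertible_det_nz by blast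
  then have "A *v column l (matrix_inv A) = column l (mat 1)"
    using matrix_inv_right[OF \<open>invertible A\<close>]
    by (simp add: vec_eq_iff column_def matrix_vector_mult_def matrix_matrix_mult_def)
  then have "column l (matrix_inv A)
      = (\<chi> k. det (\<chi> i k'. if k' = k then column l (mat 1) $ i else A $ i $ k') / det A)"
    using cramer[OF assms] by blast
  then show ?thesis
    by (simp add: vec_eq_iff column_def cong: if_cong)
qed

lemma holomorphic_on_det:
  fixes M :: "complex \<Rightarrow> complex^'n::finite^'n"
  assumes "\<And>i j. (\<lambda>z. M z $ i $ j) holomorphic_on S"
  shows "(\<lambda>z. det (M z)) holomorphic_on S"
  unfolding det_def by (intro holomorphic_intros assms)

section \<open>Elementary complex estimates\<close>

lemma one_plus_square_in_nonpos_Reals_iff: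
  fixes z :: complex
  shows "1 + z\<^sup>2 \<in> \<real>\<^sub>\<le>\<^sub>0 \<longleftrightarrow> Re z = 0 \<and> 1 \<le> \<bar>Im z\<bar>"
proof -
  have "1 + z\<^sup>2 \<in> \<real>\<^sub>\<le>\<^sub>0 \<longleftrightarrow> (Re z = 0 \<or> Im z = 0) \<and> 1 + (Re z)\<^sup>2 \<le> (Im z)\<^sup>2"
    by (auto simp: complex_nonpos_Reals_iff power2_eq_square)
  also have "\<dots> \<longleftrightarrow> Re z = 0 \<and> 1 \<le> \<bar>Im z\<bar>"
    using abs_le_square_iff[of 1 "Im z"] add_pos_nonneg[of 1 "(Re z)\<^sup>2"] by auto
  finally show ?thesis .
qed

lemma open_one_plus_square_notin_nonpos_Reals: "open {z::complex. 1 + z\<^sup>2 \<notin> \<real>\<^sub>\<le>\<^sub>0}"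
proof -
  have "open ((\<lambda>z::complex. 1 + z\<^sup>2) -` (- \<real>\<^sub>\<le>\<^sub>0))"
    by (intro continuous_open_vimage continuous_intros) (simp add: open_Compl)
  then show ?thesis by (simp add: vimage_def)
qed

lemma of_real_image_one_plus_square_notin_nonpos_Reals:
  "complex_of_real ` S \<subseteq> {z. 1 + z\<^sup>2 \<notin> \<real>\<^sub>\<le>\<^sub>0}"
  by (auto simp: one_plus_square_in_nonpos_Reals_iff)

lemma norm_inverse_minus_inverse_csqrt_le:
  fixes z :: complex
  assumes "2 \<le> t" and "t \<le> Re z"
  shows "norm (1 / z - 1 / csqrt (1 + z\<^sup>2)) \<le> 1 / t\<^sup>2"
proof -
  define s where "s = csqrt (1 + z\<^sup>2)"
  have "t \<le> norm z" using assms(2) complex_Re_le_cmod order_trans by blast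
  have "0 \<le> Re s" unfolding s_def by (rule Re_csqrt)
  then have "t \<le> Re (s + z)" using assms(2) by simp
  then have "t \<le> norm (s + z)" using complex_Re_le_cmod order_trans by blast
  have "(s - z) * (s + z) = 1" by (simp add: s_def algebra_simps power2_eq_square[symmetric])
  then have "norm (s - z) = 1 / norm (s + z)"
    by (metis norm_mult norm_one nonzero_eq_divide_eq mult_zero_right zero_neq_one norm_eq_zero)
  also have "\<dots> \<le> 1 / t" using \<open>t \<le> norm (s + z)\<close> assms(1) by (simp add: frac_le)
  finally have "norm (s - z) \<le> 1 / t" .
  have "4 - 1 \<le> norm z ^ 2 - 1"
    using power_mono[OF order_trans[OF assms(1) \<open>t \<le> norm z\<close>], of 2] by simp
  also have "norm z ^ 2 - 1 \<le> norm (1 + z\<^sup>2)"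
    using norm_triangle_ineq2[of "z\<^sup>2" "-1"] by (simp add: norm_power add.commute)
  finally have "1 \<le> norm s" by (simp add: s_def)
  have "z \<noteq> 0" and "s \<noteq> 0" using \<open>1 \<le> norm s\<close> \<open>t \<le> norm z\<close> assms(1) by auto
  then have "1 / z - 1 / s = (s - z) / (z * s)" by (simp add: field_simps)
  then have "norm (1 / z - 1 / s) = norm (s - z) / (norm z * norm s)"
    by (simp add: norm_divide norm_mult)
  also have "\<dots> \<le> (1 / t) / (t * 1)"
    using \<open>norm (s - z) \<le> 1 / t\<close> \<open>t \<le> norm z\<close> \<open>1 \<le> norm s\<close> assms(1)
    by (intro frac_le mult_mono) auto
  finally show ?thesis by (simp add: s_def power2_eq_square)
qed

lemma norm_inverse_minus_rational_le:
  fixes z :: complex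
  assumes "2 \<le> t" and "t \<le> norm z"
  shows "norm (1 / z - z / (1 + z\<^sup>2)) \<le> 1 / t\<^sup>2"
proof -
  have "norm z \<le> norm z ^ 2 - 1"
    using mult_right_mono[of 2 "norm z" "norm z"] assms by (simp add: power2_eq_square)
  also have "norm z ^ 2 - 1 \<le> norm (1 + z\<^sup>2)"
    using norm_triangle_ineq2[of "z\<^sup>2" "-1"] by (simp add: norm_power add.commute)
  finally have "norm z \<le> norm (1 + z\<^sup>2)" .
  then have "z \<noteq> 0" and "1 + z\<^sup>2 \<noteq> 0" using assms by auto
  then have "1 / z - z / (1 + z\<^sup>2) = 1 / (z * (1 + z\<^sup>2))"
    by (simp add: field_simps power2_eq_square)
  then have "norm (1 / z - z / (1 + z\<^sup>2)) = 1 / (norm z * norm (1 + z\<^sup>2))"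
    by (simp add: norm_divide norm_mult)
  also have "\<dots> \<le> 1 / (t * t)"
    using \<open>norm z \<le> norm (1 + z\<^sup>2)\<close> assms by (intro frac_le mult_mono) auto
  finally show ?thesis by (simp add: power2_eq_square)
qed

lemma cball_of_real_bounds:
  assumes "z \<in> cball (complex_of_real \<mu>) 1"
  shows "\<bar>Im z\<bar> \<le> 1" and "\<mu> - 1 \<le> Re z" and "\<mu> - 1 \<le> norm z"
proof -
  have "norm (complex_of_real \<mu> - z) \<le> 1" using assms by (simp add: dist_norm)
  moreover have "\<bar>Im z\<bar> \<le> norm (complex_of_real \<mu> - z)"
    using abs_Im_le_cmod[of "complex_of_real \<mu> - z"] by simp
  moreover have "\<bar>\<mu> - Re z\<bar> \<le> norm (complex_of_real \<mu> - z)"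
    using abs_Re_le_cmod[of "complex_of_real \<mu> - z"] by simp
  ultimately show "\<bar>Im z\<bar> \<le> 1" and "\<mu> - 1 \<le> Re z" by auto
  then show "\<mu> - 1 \<le> norm z" using complex_Re_le_cmod order_trans by blast
qed

lemma Cauchy_estimates_unit_disc:
  assumes "F holomorphic_on cball w 1" and "\<And>z. z \<in> cball w 1 \<Longrightarrow> norm (F z) \<le> B"
  shows "norm (deriv F w) \<le> B" and "norm (deriv (deriv F) w) \<le> 2 * B"
proof -
  have "F holomorphic_on ball w 1" using assms(1) ball_subset_cball holomorphic_on_subset by blast
  moreover have "continuous_on (cball w 1) F" using assms(1) holomorphic_on_imp_continuous_on by blast
  moreover have "norm (F z) \<le> B" if "norm (w - z) = 1" for z
    using assms(2) that by (simp add: dist_norm)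
  ultimately have "norm ((deriv ^^ n) F w) \<le> fact n * B / 1 ^ n" for n
    by (intro Cauchy_inequality) auto
  from this[of 1] this[of 2] show "norm (deriv F w) \<le> B" and "norm (deriv (deriv F) w) \<le> 2 * B"
    by (simp_all add: numeral_2_eq_2)
qed

lemma deriv_const_divide:
  fixes c w :: complex
  assumes "w \<noteq> 0"
  shows "deriv (\<lambda>z. c / z) w = - c / w\<^sup>2" and "deriv (deriv (\<lambda>z. c / z)) w = 2 * c / w ^ 3"
proof -
  have first: "deriv (\<lambda>z. c / z) u = - c / u\<^sup>2" if "u \<noteq> 0" for u
    by (rule DERIV_imp_deriv)
       (use that in \<open>auto intro!: derivative_eq_intros simp: power2_eq_square field_simps\<close>)
  then show "deriv (\<lambda>z. c / z) w = - c / w\<^sup>2" using assms .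
  have "eventually (\<lambda>u. u \<noteq> 0) (nhds w)" using assms by (rule t1_space_nhds)
  then have "eventually (\<lambda>u. deriv (\<lambda>z. c / z) u = - c / u\<^sup>2) (nhds w)"
    by (rule eventually_mono) (rule first)
  then have "deriv (deriv (\<lambda>z. c / z)) w = deriv (\<lambda>u. - c / u\<^sup>2) w"
    by (rule deriv_cong_ev) simp
  also have "\<dots> = 2 * c / w ^ 3"
    by (rule DERIV_imp_deriv)
       (use assms in \<open>auto intro!: derivative_eq_intros simp: power2_eq_square power3_eq_cube field_simps\<close>)
  finally show "deriv (deriv (\<lambda>z. c / z)) w = 2 * c / w ^ 3" .
qed

lemma continuous_on_norm_higher_deriv_halfline:
  assumes "F holomorphic_on V" and "open V" and "complex_of_real ` {0..} \<subseteq> V"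
  shows "continuous_on {0..} (\<lambda>\<mu>. norm ((deriv ^^ n) F (complex_of_real \<mu>)))"
proof -
  have "continuous_on V ((deriv ^^ n) F)"
    using assms(1,2) by (intro holomorphic_on_imp_continuous_on holomorphic_higher_deriv)
  then have "continuous_on (complex_of_real ` {0..}) ((deriv ^^ n) F)"
    using assms(3) continuous_on_subset by blast
  with continuous_on_of_real_id have "continuous_on {0..} ((deriv ^^ n) F \<circ> complex_of_real)"
    by (rule continuous_on_compose)
  then show ?thesis
    unfolding comp_def by (rule continuous_on_norm)
qed

section \<open>Bounds on the half-line\<close>

lemma jbr_ge_1: "1 \<le> jbr \<mu>"
  by (simp add: jbr_def)

lemma jbr_mono: "0 \<le> \<mu> \<Longrightarrow> \<mu> \<le> \<nu> \<Longrightarrow> jbr \<mu> \<le> jbr \<nu>"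
  unfolding jbr_def by (intro real_sqrt_le_mono add_left_mono power_mono) auto

lemma jbr_le_double: "1 \<le> \<mu> \<Longrightarrow> jbr \<mu> \<le> 2 * \<mu>"
  unfolding jbr_def using mult_mono[of 1 \<mu> 1 \<mu>]
  by (intro real_le_lsqrt) (auto simp: power2_eq_square)

lemma jbr_power_bound:
  fixes f :: "real \<Rightarrow> real"
  assumes "continuous_on {0..} f" and "1 \<le> R" and tail: "\<And>\<mu>. R \<le> \<mu> \<Longrightarrow> f \<mu> \<le> B / \<mu> ^ p"
  shows "\<exists>C\<ge>0. \<forall>\<mu>\<ge>0. f \<mu> \<le> C / jbr \<mu> ^ p"
proof -
  have "compact (f ` {0..R})"
    using assms(1) by (intro compact_continuous_image) (auto elim: continuous_on_subset)
  then obtain B0 where bounded: "\<forall>x \<in> f ` {0..R}. \<bar>x\<bar> \<le> B0"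
    using compact_imp_bounded bounded_real by blast
  have B0: "f \<mu> \<le> B0" if "\<mu> \<in> {0..R}" for \<mu>
    using abs_le_D1[OF bspec[OF bounded imageI[OF that]]] .
  have "0 \<le> B0"
    using bspec[OF bounded imageI[of 0 "{0..R}" f]] assms(2) by simp
  define C where "C = B0 * jbr R ^ p + 2 ^ p * max B 0"
  have C_ge: "B0 * jbr R ^ p \<le> C" "2 ^ p * max B 0 \<le> C"
    using \<open>0 \<le> B0\<close> jbr_ge_1[of R] by (simp_all add: C_def)
  have "f \<mu> \<le> C / jbr \<mu> ^ p" if "0 \<le> \<mu>" for \<mu>
  proof -
    have pos: "0 < jbr \<mu> ^ p" using jbr_ge_1[of \<mu>] by simp
    show ?thesis
    proof (cases "\<mu> \<le> R")
      case True
      have "f \<mu> * jbr \<mu> ^ p \<le> B0 * jbr \<mu> ^ p"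
        using B0[of \<mu>] True that pos by (intro mult_right_mono) auto
      also have "\<dots> \<le> B0 * jbr R ^ p"
        using jbr_mono[OF that True] jbr_ge_1[of \<mu>] \<open>0 \<le> B0\<close>
        by (intro mult_left_mono power_mono) auto
      also have "\<dots> \<le> C" by (rule C_ge(1))
      finally show ?thesis using pos by (simp add: le_divide_eq)
    next
      case False
      have "max B 0 * jbr \<mu> ^ p \<le> max B 0 * (2 * \<mu>) ^ p"
        using jbr_le_double[of \<mu>] False assms(2) jbr_ge_1[of \<mu>]
        by (intro mult_left_mono power_mono) auto
      then have "max B 0 * jbr \<mu> ^ p \<le> 2 ^ p * max B 0 * \<mu> ^ p"
        by (simp add: power_mult_distrib mult_ac)
      also have "\<dots> \<le> C * \<mu> ^ p"
        using C_ge(2) False assms(2) by (intro mult_right_mono) auto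
      finally have "max B 0 / \<mu> ^ p \<le> C / jbr \<mu> ^ p"
        using False assms(2) pos by (simp add: divide_simps)
      moreover have "B / \<mu> ^ p \<le> max B 0 / \<mu> ^ p"
        using False assms(2) by (intro divide_right_mono) auto
      moreover have "f \<mu> \<le> B / \<mu> ^ p" using tail[of \<mu>] False by simp
      ultimately show ?thesis by linarith
    qed
  qed
  moreover have "0 \<le> C" by (rule order_trans[OF _ C_ge(2)]) simp
  ultimately show ?thesis by blast
qed

lemma halfline_decay_from_disc_bounds:
  assumes hol: "F holomorphic_on V" and "open V" and "complex_of_real ` {0..} \<subseteq> V" and "1 \<le> R"
    and disc: "\<And>\<mu>. R \<le> \<mu> \<Longrightarrow> cball (complex_of_real \<mu>) 1 \<subseteq> V"
    and bound: "\<And>\<mu> z. R \<le> \<mu> \<Longrightarrow> z \<in> cball (complex_of_real \<mu>) 1 \<Longrightarrow> norm (F z) \<le> B / \<mu>\<^sup>2"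
  shows "\<exists>C. \<forall>\<mu>\<ge>0. norm (F (complex_of_real \<mu>)) + norm (deriv F (complex_of_real \<mu>))
                     + norm (deriv (deriv F) (complex_of_real \<mu>)) \<le> C / (jbr \<mu>)\<^sup>2"
proof -
  note cont = continuous_on_norm_higher_deriv_halfline[OF hol \<open>open V\<close> assms(3)]
  from cont[of 0] cont[of 1] cont[of 2]
  have "continuous_on {0..} (\<lambda>\<mu>. norm (F (complex_of_real \<mu>)))"
    and "continuous_on {0..} (\<lambda>\<mu>. norm (deriv F (complex_of_real \<mu>)))"
    and "continuous_on {0..} (\<lambda>\<mu>. norm (deriv (deriv F) (complex_of_real \<mu>)))"
    by (simp_all add: numeral_2_eq_2)
  then have "continuous_on {0..} (\<lambda>\<mu>. norm (F (complex_of_real \<mu>)) + norm (deriv F (complex_of_real \<mu>))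
                     + norm (deriv (deriv F) (complex_of_real \<mu>)))"
    by (intro continuous_on_add)
  moreover have "norm (F (complex_of_real \<mu>)) + norm (deriv F (complex_of_real \<mu>))
                   + norm (deriv (deriv F) (complex_of_real \<mu>)) \<le> (4 * B) / \<mu> ^ 2" if "R \<le> \<mu>" for \<mu>
  proof -
    have "F holomorphic_on cball (complex_of_real \<mu>) 1"
      using hol disc[OF that] by (rule holomorphic_on_subset)
    note Cauchy = Cauchy_estimates_unit_disc[OF this bound[OF that]]
    have "norm (F (complex_of_real \<mu>)) \<le> B / \<mu>\<^sup>2" using bound[OF that] by simp
    with Cauchy show ?thesis by simp
  qed
  ultimately show ?thesis using \<open>1 \<le> R\<close> by (blast dest: jbr_power_bound)
qed

lemma derivs_jbr_bounds_from_tail: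
  assumes hol: "F holomorphic_on V" and "open V" and "complex_of_real ` {0..} \<subseteq> V" and "1 \<le> R"
    and tail: "\<And>\<mu>. R \<le> \<mu> \<Longrightarrow>
      norm (F (complex_of_real \<mu>)) \<le> B / \<mu> \<and>
      norm (deriv F (complex_of_real \<mu>)) \<le> B / \<mu>\<^sup>2 \<and>
      norm (deriv (deriv F) (complex_of_real \<mu>)) \<le> B / \<mu>\<^sup>2"
  shows "\<exists>C. \<forall>\<mu>::real. \<mu> \<ge> 0 \<longrightarrow>
       norm (F (complex_of_real \<mu>)) \<le> C / jbr \<mu> \<and>
       norm (deriv F (complex_of_real \<mu>)) \<le> C / (jbr \<mu>)\<^sup>2 \<and>
       norm (deriv (deriv F) (complex_of_real \<mu>)) \<le> C / (jbr \<mu>)\<^sup>2"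
proof -
  note cont = continuous_on_norm_higher_deriv_halfline[OF hol \<open>open V\<close> assms(3)]
  from cont[of 0] cont[of 1] cont[of 2]
  have cont0: "continuous_on {0..} (\<lambda>\<mu>. norm (F (complex_of_real \<mu>)))"
    and cont1: "continuous_on {0..} (\<lambda>\<mu>. norm (deriv F (complex_of_real \<mu>)))"
    and cont2: "continuous_on {0..} (\<lambda>\<mu>. norm (deriv (deriv F) (complex_of_real \<mu>)))"
    by (simp_all add: numeral_2_eq_2)
  have "\<exists>C\<ge>0. \<forall>\<mu>\<ge>0. norm (F (complex_of_real \<mu>)) \<le> C / jbr \<mu> ^ 1"
    by (rule jbr_power_bound[OF cont0 \<open>1 \<le> R\<close>, where B = B]) (use tail in simp)
  then obtain C0 where "0 \<le> C0" and C0: "\<And>\<mu>. 0 \<le> \<mu> \<Longrightarrow>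
      norm (F (complex_of_real \<mu>)) \<le> C0 / jbr \<mu>" by auto
  have "\<exists>C\<ge>0. \<forall>\<mu>\<ge>0. norm (deriv F (complex_of_real \<mu>)) \<le> C / jbr \<mu> ^ 2"
    by (rule jbr_power_bound[OF cont1 \<open>1 \<le> R\<close>, where B = B]) (use tail in simp)
  then obtain C1 where "0 \<le> C1" and C1: "\<And>\<mu>. 0 \<le> \<mu> \<Longrightarrow>
      norm (deriv F (complex_of_real \<mu>)) \<le> C1 / (jbr \<mu>)\<^sup>2" by auto
  have "\<exists>C\<ge>0. \<forall>\<mu>\<ge>0. norm (deriv (deriv F) (complex_of_real \<mu>)) \<le> C / jbr \<mu> ^ 2"
    by (rule jbr_power_bound[OF cont2 \<open>1 \<le> R\<close>, where B = B]) (use tail in simp)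
  then obtain C2 where "0 \<le> C2" and C2: "\<And>\<mu>. 0 \<le> \<mu> \<Longrightarrow>
      norm (deriv (deriv F) (complex_of_real \<mu>)) \<le> C2 / (jbr \<mu>)\<^sup>2" by auto
  have weaken: "C' / jbr \<mu> ^ p \<le> (C0 + C1 + C2) / jbr \<mu> ^ p" if "C' \<le> C0 + C1 + C2" for C' \<mu> and p :: nat
    using that jbr_ge_1[of \<mu>] by (intro divide_right_mono) auto
  show ?thesis
  proof (intro exI allI impI conjI)
    fix \<mu> :: real assume "0 \<le> \<mu>"
    show "norm (F (complex_of_real \<mu>)) \<le> (C0 + C1 + C2) / jbr \<mu>"
      using C0[OF \<open>0 \<le> \<mu>\<close>] weaken[of C0 \<mu> 1] \<open>0 \<le> C1\<close> \<open>0 \<le> C2\<close> by simp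
    show "norm (deriv F (complex_of_real \<mu>)) \<le> (C0 + C1 + C2) / (jbr \<mu>)\<^sup>2"
      using C1[OF \<open>0 \<le> \<mu>\<close>] weaken[of C1 \<mu> 2] \<open>0 \<le> C0\<close> \<open>0 \<le> C2\<close> by simp
    show "norm (deriv (deriv F) (complex_of_real \<mu>)) \<le> (C0 + C1 + C2) / (jbr \<mu>)\<^sup>2"
      using C2[OF \<open>0 \<le> \<mu>\<close>] weaken[of C2 \<mu> 2] \<open>0 \<le> C0\<close> \<open>0 \<le> C1\<close> by simp
  qed
qed

section \<open>The inverse of Gamma\<close>

lemma Gamma_mat_entry_holomorphic: "(\<lambda>z. Gamma_mat \<alpha> y z $ i $ j) holomorphic_on S"
  unfolding Gamma_mat_def by (cases "i = j") (auto intro!: holomorphic_intros)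

definition Gamma_invertible_set :: "('n::finite \<Rightarrow> real) \<Rightarrow> ('n \<Rightarrow> real^3) \<Rightarrow> complex set" where
  "Gamma_invertible_set \<alpha> y = {z. invertible (Gamma_mat \<alpha> y z)}"

lemma open_Gamma_invertible_set: "open (Gamma_invertible_set \<alpha> y)"
proof -
  have "continuous_on UNIV (\<lambda>z. det (Gamma_mat \<alpha> y z))"
    by (intro holomorphic_on_imp_continuous_on holomorphic_on_det Gamma_mat_entry_holomorphic)
  then show ?thesis
    unfolding Gamma_invertible_set_def invertible_det_nz by (intro open_Collect_neq) auto
qed

lemma cinv_holomorphic: "cinv \<alpha> y j l holomorphic_on Gamma_invertible_set \<alpha> y"
proof -
  have "(\<lambda>z. (\<chi> i k. if k = j then mat 1 $ i $ l else Gamma_mat \<alpha> y z $ i $ k) $ i' $ k')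
          holomorphic_on S" for i' k' S
    by (cases "k' = j") (simp_all add: Gamma_mat_entry_holomorphic)
  then have "(\<lambda>z. det (\<chi> i k. if k = j then mat 1 $ i $ l else Gamma_mat \<alpha> y z $ i $ k)
           / det (Gamma_mat \<alpha> y z)) holomorphic_on Gamma_invertible_set \<alpha> y"
    by (intro holomorphic_intros holomorphic_on_det)
       (auto simp: Gamma_invertible_set_def invertible_det_nz Gamma_mat_entry_holomorphic)
  then show ?thesis
    by (rule holomorphic_transform)
       (simp add: cinv_def Gamma_invertible_set_def invertible_det_nz matrix_inv_entry_cramer)
qed

lemma norm_Gamma_mat_offdiag_le:
  assumes "\<bar>Im z\<bar> \<le> 1" and "j \<noteq> l"
  shows "norm (Gamma_mat \<alpha> y z $ j $ l) \<le> exp (dist (y j) (y l)) / (4 * pi * dist (y j) (y l))"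
proof -
  define d where "d = dist (y j) (y l)"
  have "norm (Gamma_mat \<alpha> y z $ j $ l) = exp (- Im z * d) / (4 * pi * d)"
    using \<open>j \<noteq> l\<close> by (simp add: Gamma_mat_def d_def norm_divide norm_mult norm_exp_eq_Re)
  also have "\<dots> \<le> exp d / (4 * pi * d)"
    using assms(1) mult_right_mono[of "- Im z" 1 d] by (intro divide_right_mono) (auto simp: d_def)
  finally show ?thesis by (simp add: d_def)
qed

definition Gamma_perturbation_bound :: "('n::finite \<Rightarrow> real) \<Rightarrow> ('n \<Rightarrow> real^3) \<Rightarrow> real" where
  "Gamma_perturbation_bound \<alpha> y =
     (\<Sum>j\<in>UNIV. \<Sum>l\<in>UNIV. \<bar>\<alpha> j\<bar> + exp (dist (y j) (y l)) / (4 * pi * dist (y j) (y l)))"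

lemma Gamma_perturbation_bound_nonneg: "0 \<le> Gamma_perturbation_bound \<alpha> y"
  unfolding Gamma_perturbation_bound_def by (intro sum_nonneg add_nonneg_nonneg) auto

lemma l1_norm_Gamma_mat_minus_scalar_le:
  assumes "\<bar>Im z\<bar> \<le> 1"
  shows "(\<Sum>i\<in>UNIV. \<Sum>k\<in>UNIV. norm ((Gamma_mat \<alpha> y z - mat (- \<i> * z / (4 * pi))) $ i $ k))
           \<le> Gamma_perturbation_bound \<alpha> y"
  unfolding Gamma_perturbation_bound_def
proof (intro sum_mono)
  fix i k
  show "norm ((Gamma_mat \<alpha> y z - mat (- \<i> * z / (4 * pi))) $ i $ k)
          \<le> \<bar>\<alpha> i\<bar> + exp (dist (y i) (y k)) / (4 * pi * dist (y i) (y k))"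
  proof (cases "i = k")
    case False
    then have "norm ((Gamma_mat \<alpha> y z - mat (- \<i> * z / (4 * pi))) $ i $ k)
                 \<le> exp (dist (y i) (y k)) / (4 * pi * dist (y i) (y k))"
      using norm_Gamma_mat_offdiag_le[OF assms False] by (simp add: mat_def)
    then show ?thesis by (simp add: add_increasing)
  qed (simp add: Gamma_mat_def mat_def)
qed

lemma cinv_strip_estimate:
  fixes \<alpha> :: "'n::finite \<Rightarrow> real"
  assumes "\<bar>Im z\<bar> \<le> 1" and "z \<noteq> 0" and "8 * pi * Gamma_perturbation_bound \<alpha> y \<le> norm z"
  shows "invertible (Gamma_mat \<alpha> y z)"
    and "norm (cinv \<alpha> y j l z - (if j = l then 4 * complex_of_real pi * \<i> / z else 0))
           \<le> 32 * pi\<^sup>2 * Gamma_perturbation_bound \<alpha> y / norm z ^ 2"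
proof -
  define M where "M = Gamma_perturbation_bound \<alpha> y"
  define a where "a = - \<i> * z / (4 * pi)"
  define K where "K = Gamma_mat \<alpha> y z - mat a"
  have Gamma: "Gamma_mat \<alpha> y z = mat a + K" by (simp add: K_def)
  have "a \<noteq> 0" using \<open>z \<noteq> 0\<close> by (simp add: a_def)
  have norm_a: "norm a = norm z / (4 * pi)" by (simp add: a_def norm_divide norm_mult)
  have K_le: "(\<Sum>i\<in>UNIV. \<Sum>k\<in>UNIV. norm (K $ i $ k)) \<le> M"
    unfolding K_def a_def M_def by (rule l1_norm_Gamma_mat_minus_scalar_le[OF assms(1)])
  also have "M \<le> norm a / 2" using assms(3) by (simp add: norm_a M_def field_simps)
  finally have small: "(\<Sum>i\<in>UNIV. \<Sum>k\<in>UNIV. norm (K $ i $ k)) \<le> norm a / 2" .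
  show "invertible (Gamma_mat \<alpha> y z)"
    unfolding Gamma by (rule matrix_inv_scalar_plus_small(1)[OF \<open>a \<noteq> 0\<close> small])
  have "inverse a = 4 * complex_of_real pi * \<i> / z"
    by (rule inverse_unique) (use \<open>z \<noteq> 0\<close> in \<open>simp add: a_def field_simps\<close>)
  then have "cinv \<alpha> y j l z - (if j = l then 4 * complex_of_real pi * \<i> / z else 0)
               = matrix_inv (mat a + K) $ j $ l - mat (inverse a) $ j $ l"
    by (simp add: cinv_def Gamma mat_def)
  then have "norm (cinv \<alpha> y j l z - (if j = l then 4 * complex_of_real pi * \<i> / z else 0))
               \<le> 2 * (\<Sum>i\<in>UNIV. \<Sum>k\<in>UNIV. norm (K $ i $ k)) / norm a ^ 2"
    using matrix_inv_scalar_plus_small(2)[OF \<open>a \<noteq> 0\<close> small] by simp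
  also have "\<dots> \<le> 2 * M / norm a ^ 2"
    using K_le by (simp add: divide_right_mono)
  also have "\<dots> = 32 * pi\<^sup>2 * M / norm z ^ 2"
    by (simp add: norm_a field_simps)
  finally show "norm (cinv \<alpha> y j l z - (if j = l then 4 * complex_of_real pi * \<i> / z else 0))
           \<le> 32 * pi\<^sup>2 * Gamma_perturbation_bound \<alpha> y / norm z ^ 2"
    by (simp add: M_def)
qed

lemma cinv_disc_estimate:
  fixes \<alpha> :: "'n::finite \<Rightarrow> real"
  obtains R B where "4 \<le> R"
    and "\<And>\<mu> z. R \<le> \<mu> \<Longrightarrow> z \<in> cball (complex_of_real \<mu>) 1 \<Longrightarrow>
           invertible (Gamma_mat \<alpha> y z) \<and>
           norm (cinv \<alpha> y j l z - (if j = l then 4 * complex_of_real pi * \<i> / z else 0)) \<le> B / \<mu>\<^sup>2"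
proof
  define M where "M = Gamma_perturbation_bound \<alpha> y"
  have "0 \<le> M" by (simp add: M_def Gamma_perturbation_bound_nonneg)
  show "4 \<le> 8 * pi * M + 4" using \<open>0 \<le> M\<close> by simp
  fix \<mu> z assume \<mu>: "8 * pi * M + 4 \<le> \<mu>" and z: "z \<in> cball (complex_of_real \<mu>) 1"
  have "4 \<le> \<mu>" using \<mu> \<open>0 \<le> M\<close> by (simp add: order_trans[OF _ \<mu>])
  note z_bounds = cball_of_real_bounds[OF z]
  have "z \<noteq> 0" using z_bounds(3) \<open>4 \<le> \<mu>\<close> by auto
  have "8 * pi * M \<le> norm z"
    using z_bounds(3) \<mu> by linarith
  note strip = cinv_strip_estimate[OF z_bounds(1) \<open>z \<noteq> 0\<close> this[unfolded M_def]]
  have "\<mu> / 2 \<le> norm z" using z_bounds(3) \<open>4 \<le> \<mu>\<close> by linarith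
  then have "32 * pi\<^sup>2 * M / norm z ^ 2 \<le> 32 * pi\<^sup>2 * M / (\<mu> / 2) ^ 2"
    using \<open>0 \<le> M\<close> \<open>4 \<le> \<mu>\<close>
    by (intro divide_left_mono power_mono mult_pos_pos) auto
  also have "\<dots> = 128 * pi\<^sup>2 * M / \<mu>\<^sup>2" by (simp add: field_simps)
  finally show "invertible (Gamma_mat \<alpha> y z) \<and>
      norm (cinv \<alpha> y j l z - (if j = l then 4 * complex_of_real pi * \<i> / z else 0)) \<le> 128 * pi\<^sup>2 * M / \<mu>\<^sup>2"
    using strip(1) order_trans[OF strip(2)] by (simp add: M_def)
qed

lemma tail_bounds_add_const_divide:
  fixes F :: "complex \<Rightarrow> complex" and \<kappa> :: complex
  assumes "1 \<le> \<mu>" and hol: "F holomorphic_on cball (complex_of_real \<mu>) 1"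
    and bound: "\<And>z. z \<in> cball (complex_of_real \<mu>) 1 \<Longrightarrow> norm (F z) \<le> B / \<mu>\<^sup>2"
    and "norm \<kappa> \<le> K"
  shows "norm (F (complex_of_real \<mu>) + \<kappa> / complex_of_real \<mu>) \<le> (2 * B + 2 * K) / \<mu> \<and>
    norm (deriv (\<lambda>z. F z + \<kappa> / z) (complex_of_real \<mu>)) \<le> (2 * B + 2 * K) / \<mu>\<^sup>2 \<and>
    norm (deriv (deriv (\<lambda>z. F z + \<kappa> / z)) (complex_of_real \<mu>)) \<le> (2 * B + 2 * K) / \<mu>\<^sup>2"
proof -
  define w where "w = complex_of_real \<mu>"
  have "norm w = \<mu>" and "w \<noteq> 0" using \<open>1 \<le> \<mu>\<close> by (auto simp: w_def)
  have "0 \<notin> ball w 1" using \<open>norm w = \<mu>\<close> \<open>1 \<le> \<mu>\<close> by simp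
  then have "(\<lambda>z. \<kappa> / z) holomorphic_on ball w 1" by (intro holomorphic_intros) auto
  note sum_rule = higher_deriv_add[OF holomorphic_on_subset[OF hol[folded w_def] ball_subset_cball]
      this open_ball centre_in_ball[THEN iffD2, OF zero_less_one]]
  have derivs: "deriv (\<lambda>z. F z + \<kappa> / z) w = deriv F w - \<kappa> / w\<^sup>2"
    "deriv (deriv (\<lambda>z. F z + \<kappa> / z)) w = deriv (deriv F) w + 2 * \<kappa> / w ^ 3"
    using sum_rule[of 1] sum_rule[of 2] deriv_const_divide[OF \<open>w \<noteq> 0\<close>, of \<kappa>]
    by (simp_all add: numeral_2_eq_2)
  note Cauchy = Cauchy_estimates_unit_disc[OF hol bound, folded w_def]
  have "0 \<le> B / \<mu>\<^sup>2" using order_trans[OF norm_ge_zero bound[of w]] by (simp add: w_def)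
  then have "0 \<le> B" using \<open>1 \<le> \<mu>\<close> by (auto simp: zero_le_divide_iff)
  have "0 \<le> K" using \<open>norm \<kappa> \<le> K\<close> norm_ge_zero order_trans by blast
  have "norm (F w + \<kappa> / w) \<le> B / \<mu>\<^sup>2 + K / \<mu>"
    using norm_triangle_ineq[of "F w" "\<kappa> / w"] bound[of w] \<open>norm \<kappa> \<le> K\<close> \<open>1 \<le> \<mu>\<close>
    by (simp add: w_def norm_divide divide_right_mono add_mono order_trans)
  also have "\<dots> \<le> B / \<mu> + K / \<mu>"
    using \<open>1 \<le> \<mu>\<close> \<open>0 \<le> B\<close> by (simp add: divide_left_mono power2_eq_square)
  also have "\<dots> \<le> (2 * B + 2 * K) / \<mu>"
    using \<open>1 \<le> \<mu>\<close> \<open>0 \<le> B\<close> \<open>0 \<le> K\<close> by (simp add: add_divide_distrib[symmetric] divide_right_mono)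
  finally have c0: "norm (F w + \<kappa> / w) \<le> (2 * B + 2 * K) / \<mu>" .
  have "norm (deriv (\<lambda>z. F z + \<kappa> / z) w) \<le> B / \<mu>\<^sup>2 + K / \<mu>\<^sup>2"
    using norm_triangle_ineq4[of "deriv F w" "\<kappa> / w\<^sup>2"] Cauchy(1) \<open>norm \<kappa> \<le> K\<close>
    by (simp add: derivs norm_divide norm_power \<open>norm w = \<mu>\<close> divide_right_mono add_mono order_trans)
  also have "\<dots> \<le> (2 * B + 2 * K) / \<mu>\<^sup>2"
    using \<open>0 \<le> B\<close> \<open>0 \<le> K\<close> by (simp add: add_divide_distrib[symmetric] divide_right_mono)
  finally have c1: "norm (deriv (\<lambda>z. F z + \<kappa> / z) w) \<le> (2 * B + 2 * K) / \<mu>\<^sup>2" .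
  have "2 * norm \<kappa> / \<mu> ^ 3 \<le> 2 * K / \<mu> ^ 3"
    using \<open>norm \<kappa> \<le> K\<close> \<open>1 \<le> \<mu>\<close> by (intro divide_right_mono) auto
  also have "\<dots> \<le> 2 * K / \<mu>\<^sup>2"
    using \<open>1 \<le> \<mu>\<close> \<open>0 \<le> K\<close> power_increasing[of 2 3 \<mu>] by (intro divide_left_mono) auto
  finally have "norm (deriv (deriv (\<lambda>z. F z + \<kappa> / z)) w) \<le> 2 * (B / \<mu>\<^sup>2) + 2 * K / \<mu>\<^sup>2"
    using norm_triangle_ineq[of "deriv (deriv F) w" "2 * \<kappa> / w ^ 3"] Cauchy(2)
    by (simp add: derivs norm_divide norm_mult norm_power \<open>norm w = \<mu>\<close>)
  then have c2: "norm (deriv (deriv (\<lambda>z. F z + \<kappa> / z)) w) \<le> (2 * B + 2 * K) / \<mu>\<^sup>2"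
    by (simp add: add_divide_distrib)
  from c0 c1 c2 show ?thesis by (simp add: w_def)
qed

lemma cinv_tail_bounds:
  fixes \<alpha> :: "'n::finite \<Rightarrow> real"
  obtains R B where "1 \<le> R"
    and "\<And>\<mu>. R \<le> \<mu> \<Longrightarrow>
           norm (cinv \<alpha> y j l (complex_of_real \<mu>)) \<le> B / \<mu> \<and>
           norm (deriv (cinv \<alpha> y j l) (complex_of_real \<mu>)) \<le> B / \<mu>\<^sup>2 \<and>
           norm (deriv (deriv (cinv \<alpha> y j l)) (complex_of_real \<mu>)) \<le> B / \<mu>\<^sup>2"
proof -
  define \<kappa> where "\<kappa> = (if j = l then 4 * complex_of_real pi * \<i> else 0)"
  have "norm \<kappa> \<le> 4 * pi" by (simp add: \<kappa>_def norm_mult)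
  obtain R B where "4 \<le> R" and disc_est: "\<And>\<mu> z. R \<le> \<mu> \<Longrightarrow> z \<in> cball (complex_of_real \<mu>) 1 \<Longrightarrow>
      invertible (Gamma_mat \<alpha> y z) \<and>
      norm (cinv \<alpha> y j l z - (if j = l then 4 * complex_of_real pi * \<i> / z else 0)) \<le> B / \<mu>\<^sup>2"
    using cinv_disc_estimate[of \<alpha> y j l] by blast
  define F where "F z = cinv \<alpha> y j l z - \<kappa> / z" for z
  have c_eq: "cinv \<alpha> y j l = (\<lambda>z. F z + \<kappa> / z)" by (simp add: F_def fun_eq_iff)
  show ?thesis
  proof (rule that[of R "2 * B + 2 * (4 * pi)"])
    show "1 \<le> R" using \<open>4 \<le> R\<close> by simp
    fix \<mu> assume "R \<le> \<mu>"
    have "cball (complex_of_real \<mu>) 1 \<subseteq> Gamma_invertible_set \<alpha> y - {0}"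
      using disc_est[OF \<open>R \<le> \<mu>\<close>] cball_of_real_bounds(3) \<open>4 \<le> R\<close> \<open>R \<le> \<mu>\<close>
      by (force simp: Gamma_invertible_set_def)
    moreover have "F holomorphic_on Gamma_invertible_set \<alpha> y - {0}"
      unfolding F_def by (intro holomorphic_intros holomorphic_on_subset[OF cinv_holomorphic]) auto
    ultimately have "F holomorphic_on cball (complex_of_real \<mu>) 1"
      by (rule holomorphic_on_subset[rotated])
    moreover have "norm (F z) \<le> B / \<mu>\<^sup>2" if "z \<in> cball (complex_of_real \<mu>) 1" for z
      using disc_est[OF \<open>R \<le> \<mu>\<close> that] by (cases "j = l") (simp_all add: F_def \<kappa>_def)
    ultimately show "norm (cinv \<alpha> y j l (complex_of_real \<mu>)) \<le> (2 * B + 2 * (4 * pi)) / \<mu> \<and>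
           norm (deriv (cinv \<alpha> y j l) (complex_of_real \<mu>)) \<le> (2 * B + 2 * (4 * pi)) / \<mu>\<^sup>2 \<and>
           norm (deriv (deriv (cinv \<alpha> y j l)) (complex_of_real \<mu>)) \<le> (2 * B + 2 * (4 * pi)) / \<mu>\<^sup>2"
      using tail_bounds_add_const_divide[of \<mu> F B \<kappa> "4 * pi"] \<open>norm \<kappa> \<le> 4 * pi\<close> \<open>4 \<le> R\<close> \<open>R \<le> \<mu>\<close>
      unfolding c_eq by simp
  qed
qed

lemma cinv_decay:
  fixes \<alpha> :: "'n::finite \<Rightarrow> real"
  assumes inv: "\<And>\<mu>::real. \<mu> \<ge> 0 \<Longrightarrow> invertible (Gamma_mat \<alpha> y (complex_of_real \<mu>))"
  shows "holo_near_halfline (cinv \<alpha> y j l) \<and>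
    (\<exists>C. \<forall>\<mu>::real. \<mu> \<ge> 0 \<longrightarrow>
       norm (cinv \<alpha> y j l (complex_of_real \<mu>)) \<le> C / jbr \<mu> \<and>
       norm (deriv (cinv \<alpha> y j l) (complex_of_real \<mu>)) \<le> C / (jbr \<mu>)\<^sup>2 \<and>
       norm (deriv (deriv (cinv \<alpha> y j l)) (complex_of_real \<mu>)) \<le> C / (jbr \<mu>)\<^sup>2)"
proof
  have reals: "complex_of_real ` {0..} \<subseteq> Gamma_invertible_set \<alpha> y"
    using inv by (auto simp: Gamma_invertible_set_def)
  with open_Gamma_invertible_set[of \<alpha> y] cinv_holomorphic[of \<alpha> y j l]
  show "holo_near_halfline (cinv \<alpha> y j l)"
    unfolding holo_near_halfline_def by blast
  obtain R B where "1 \<le> R" and tail: "\<And>\<mu>. R \<le> \<mu> \<Longrightarrow>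
      norm (cinv \<alpha> y j l (complex_of_real \<mu>)) \<le> B / \<mu> \<and>
      norm (deriv (cinv \<alpha> y j l) (complex_of_real \<mu>)) \<le> B / \<mu>\<^sup>2 \<and>
      norm (deriv (deriv (cinv \<alpha> y j l)) (complex_of_real \<mu>)) \<le> B / \<mu>\<^sup>2"
    using cinv_tail_bounds[of \<alpha> y j l] by blast
  show "\<exists>C. \<forall>\<mu>::real. \<mu> \<ge> 0 \<longrightarrow>
       norm (cinv \<alpha> y j l (complex_of_real \<mu>)) \<le> C / jbr \<mu> \<and>
       norm (deriv (cinv \<alpha> y j l) (complex_of_real \<mu>)) \<le> C / (jbr \<mu>)\<^sup>2 \<and>
       norm (deriv (deriv (cinv \<alpha> y j l)) (complex_of_real \<mu>)) \<le> C / (jbr \<mu>)\<^sup>2"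
    by (rule derivs_jbr_bounds_from_tail[OF cinv_holomorphic open_Gamma_invertible_set reals \<open>1 \<le> R\<close> tail])
qed

lemma cinv_minus_model_decay:
  fixes \<alpha> :: "'n::finite \<Rightarrow> real"
  assumes inv: "\<And>\<mu>::real. \<mu> \<ge> 0 \<Longrightarrow> invertible (Gamma_mat \<alpha> y (complex_of_real \<mu>))"
    and m_hol: "m holomorphic_on W" and "open W" and "complex_of_real ` {0..} \<subseteq> W"
    and model: "\<And>\<mu> z. R \<le> \<mu> \<Longrightarrow> z \<in> cball (complex_of_real \<mu>) 1 \<Longrightarrow>
                  z \<in> W \<and> norm ((if j = l then 4 * complex_of_real pi * \<i> / z else 0) - m z) \<le> B / \<mu>\<^sup>2"
  shows "holo_near_halfline (\<lambda>z. cinv \<alpha> y j l z - m z) \<and>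
    (\<exists>C. \<forall>\<mu>\<ge>0. norm (cinv \<alpha> y j l (complex_of_real \<mu>) - m (complex_of_real \<mu>))
        + norm (deriv (\<lambda>z. cinv \<alpha> y j l z - m z) (complex_of_real \<mu>))
        + norm (deriv (deriv (\<lambda>z. cinv \<alpha> y j l z - m z)) (complex_of_real \<mu>)) \<le> C / (jbr \<mu>)\<^sup>2)"
proof
  define V where "V = Gamma_invertible_set \<alpha> y \<inter> W"
  have "open V" using open_Gamma_invertible_set \<open>open W\<close> by (auto simp: V_def)
  have reals: "complex_of_real ` {0..} \<subseteq> V"
    using inv assms(4) by (auto simp: V_def Gamma_invertible_set_def)
  have "cinv \<alpha> y j l holomorphic_on V"
    using cinv_holomorphic by (rule holomorphic_on_subset) (simp add: V_def)
  moreover have "m holomorphic_on V"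
    using m_hol by (rule holomorphic_on_subset) (simp add: V_def)
  ultimately have hol: "(\<lambda>z. cinv \<alpha> y j l z - m z) holomorphic_on V"
    by (rule holomorphic_on_diff)
  then show "holo_near_halfline (\<lambda>z. cinv \<alpha> y j l z - m z)"
    unfolding holo_near_halfline_def using \<open>open V\<close> reals by blast
  obtain R0 B0 where "4 \<le> R0" and disc_est: "\<And>\<mu> z. R0 \<le> \<mu> \<Longrightarrow> z \<in> cball (complex_of_real \<mu>) 1 \<Longrightarrow>
      invertible (Gamma_mat \<alpha> y z) \<and>
      norm (cinv \<alpha> y j l z - (if j = l then 4 * complex_of_real pi * \<i> / z else 0)) \<le> B0 / \<mu>\<^sup>2"
    using cinv_disc_estimate[of \<alpha> y j l] by blast
  show "\<exists>C. \<forall>\<mu>\<ge>0. norm (cinv \<alpha> y j l (complex_of_real \<mu>) - m (complex_of_real \<mu>))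
        + norm (deriv (\<lambda>z. cinv \<alpha> y j l z - m z) (complex_of_real \<mu>))
        + norm (deriv (deriv (\<lambda>z. cinv \<alpha> y j l z - m z)) (complex_of_real \<mu>)) \<le> C / (jbr \<mu>)\<^sup>2"
  proof (rule halfline_decay_from_disc_bounds[OF hol \<open>open V\<close> reals, of "max R R0" "B0 + B"])
    show "1 \<le> max R R0" using \<open>4 \<le> R0\<close> by simp
    fix \<mu> assume "max R R0 \<le> \<mu>"
    then have "R \<le> \<mu>" "R0 \<le> \<mu>" by auto
    show "cball (complex_of_real \<mu>) 1 \<subseteq> V"
      using disc_est[OF \<open>R0 \<le> \<mu>\<close>] model[OF \<open>R \<le> \<mu>\<close>] by (auto simp: V_def Gamma_invertible_set_def)
    fix z assume z: "z \<in> cball (complex_of_real \<mu>) 1"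
    have "norm (cinv \<alpha> y j l z - m z) \<le> B0 / \<mu>\<^sup>2 + B / \<mu>\<^sup>2"
      using disc_est[OF \<open>R0 \<le> \<mu>\<close> z] model[OF \<open>R \<le> \<mu>\<close> z]
      by (intro norm_diff_triangle_le[where y = "if j = l then 4 * complex_of_real pi * \<i> / z else 0"])
         auto
    then show "norm (cinv \<alpha> y j l z - m z) \<le> (B0 + B) / \<mu>\<^sup>2"
      by (simp add: add_divide_distrib)
  qed
qed

lemma csqrt_model_holomorphic:
  "(\<lambda>z. if j = l then 4 * complex_of_real pi * \<i> / csqrt (1 + z\<^sup>2) else 0)
     holomorphic_on {z. 1 + z\<^sup>2 \<notin> \<real>\<^sub>\<le>\<^sub>0}"
proof (cases "j = l")
  case True
  have "csqrt (1 + z\<^sup>2) \<noteq> 0" if "1 + z\<^sup>2 \<notin> \<real>\<^sub>\<le>\<^sub>0" for z :: complex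
    using that by auto
  then show ?thesis using True by (auto intro!: holomorphic_intros)
qed simp

lemma rational_model_holomorphic:
  "(\<lambda>z. if j = l then 4 * complex_of_real pi * \<i> * z / (1 + z\<^sup>2) else 0)
     holomorphic_on {z. 1 + z\<^sup>2 \<notin> \<real>\<^sub>\<le>\<^sub>0}"
proof (cases "j = l")
  case True
  then show ?thesis by (auto intro!: holomorphic_intros)
qed simp

lemma csqrt_model_near_inverse:
  assumes "4 \<le> \<mu>" and "z \<in> cball (complex_of_real \<mu>) 1"
  shows "1 + z\<^sup>2 \<notin> \<real>\<^sub>\<le>\<^sub>0 \<and>
    norm ((if j = l then 4 * complex_of_real pi * \<i> / z else 0)
          - (if j = l then 4 * complex_of_real pi * \<i> / csqrt (1 + z\<^sup>2) else 0)) \<le> 16 * pi / \<mu>\<^sup>2"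
proof
  have "\<mu> / 2 \<le> Re z" using cball_of_real_bounds(2)[OF assms(2)] assms(1) by linarith
  then show "1 + z\<^sup>2 \<notin> \<real>\<^sub>\<le>\<^sub>0" using assms(1) by (simp add: one_plus_square_in_nonpos_Reals_iff)
  have "norm (1 / z - 1 / csqrt (1 + z\<^sup>2)) \<le> 1 / (\<mu> / 2)\<^sup>2"
    using \<open>\<mu> / 2 \<le> Re z\<close> assms(1) by (intro norm_inverse_minus_inverse_csqrt_le) auto
  then have "4 * pi * norm (1 / z - 1 / csqrt (1 + z\<^sup>2)) \<le> 4 * pi * (1 / (\<mu> / 2)\<^sup>2)"
    by (rule mult_left_mono) simp
  also have "\<dots> = 16 * pi / \<mu>\<^sup>2" by (simp add: power_divide)
  finally have "4 * pi * norm (1 / z - 1 / csqrt (1 + z\<^sup>2)) \<le> 16 * pi / \<mu>\<^sup>2" .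
  moreover have "4 * complex_of_real pi * \<i> / z - 4 * complex_of_real pi * \<i> / csqrt (1 + z\<^sup>2)
      = 4 * complex_of_real pi * \<i> * (1 / z - 1 / csqrt (1 + z\<^sup>2))"
    by (simp add: right_diff_distrib)
  ultimately show "norm ((if j = l then 4 * complex_of_real pi * \<i> / z else 0)
          - (if j = l then 4 * complex_of_real pi * \<i> / csqrt (1 + z\<^sup>2) else 0)) \<le> 16 * pi / \<mu>\<^sup>2"
    by (simp add: norm_mult)
qed

lemma rational_model_near_inverse:
  assumes "4 \<le> \<mu>" and "z \<in> cball (complex_of_real \<mu>) 1"
  shows "1 + z\<^sup>2 \<notin> \<real>\<^sub>\<le>\<^sub>0 \<and>
    norm ((if j = l then 4 * complex_of_real pi * \<i> / z else 0)
          - (if j = l then 4 * complex_of_real pi * \<i> * z / (1 + z\<^sup>2) else 0)) \<le> 16 * pi / \<mu>\<^sup>2"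
proof
  have "\<mu> / 2 \<le> Re z" using cball_of_real_bounds(2)[OF assms(2)] assms(1) by linarith
  then show "1 + z\<^sup>2 \<notin> \<real>\<^sub>\<le>\<^sub>0" using assms(1) by (simp add: one_plus_square_in_nonpos_Reals_iff)
  have "norm (1 / z - z / (1 + z\<^sup>2)) \<le> 1 / (\<mu> / 2)\<^sup>2"
    using cball_of_real_bounds(3)[OF assms(2)] assms(1) by (intro norm_inverse_minus_rational_le) auto
  then have "4 * pi * norm (1 / z - z / (1 + z\<^sup>2)) \<le> 4 * pi * (1 / (\<mu> / 2)\<^sup>2)"
    by (rule mult_left_mono) simp
  also have "\<dots> = 16 * pi / \<mu>\<^sup>2" by (simp add: power_divide)
  finally have "4 * pi * norm (1 / z - z / (1 + z\<^sup>2)) \<le> 16 * pi / \<mu>\<^sup>2" .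
  moreover have "4 * complex_of_real pi * \<i> / z - 4 * complex_of_real pi * \<i> * z / (1 + z\<^sup>2)
      = 4 * complex_of_real pi * \<i> * (1 / z - z / (1 + z\<^sup>2))"
    by (simp add: right_diff_distrib)
  ultimately show "norm ((if j = l then 4 * complex_of_real pi * \<i> / z else 0)
          - (if j = l then 4 * complex_of_real pi * \<i> * z / (1 + z\<^sup>2) else 0)) \<le> 16 * pi / \<mu>\<^sup>2"
    by (simp add: norm_mult)
qed

theorem lemma4p1:
  fixes \<alpha> :: "'n::finite \<Rightarrow> real" and y :: "'n \<Rightarrow> real^3"
  assumes distinct: "inj y"
    and inv: "\<And>\<mu>::real. \<mu> \<ge> 0 \<Longrightarrow> invertible (Gamma_mat \<alpha> y (complex_of_real \<mu>))"
    and locbd: "\<And>\<mu>0::real. \<mu>0 \<ge> 0 \<Longrightarrow> \<exists>e>0. \<exists>B. \<forall>\<mu>::real. \<mu> \<ge> 0 \<and> \<bar>\<mu> - \<mu>0\<bar> < e \<longrightarrow>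
               (\<forall>j l. norm (matrix_inv (Gamma_mat \<alpha> y (complex_of_real \<mu>)) $ j $ l) \<le> B)"
  shows
   "(\<forall>j l. holo_near_halfline (cinv \<alpha> y j l) \<and>
       (\<exists>C. \<forall>\<mu>::real. \<mu> \<ge> 0 \<longrightarrow>
          norm (cinv \<alpha> y j l (complex_of_real \<mu>)) \<le> C / jbr \<mu> \<and>
          norm (deriv (cinv \<alpha> y j l) (complex_of_real \<mu>)) \<le> C / (jbr \<mu>)^2 \<and>
          norm (deriv (deriv (cinv \<alpha> y j l)) (complex_of_real \<mu>)) \<le> C / (jbr \<mu>)^2))
    \<and> (\<forall>j l. let d = (\<lambda>z. cinv \<alpha> y j l z
              - (if j = l then 4 * complex_of_real pi * \<i> / csqrt (1 + z^2) else 0)) in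
        holo_near_halfline d \<and>
        (\<exists>C. \<forall>\<mu>::real. \<mu> \<ge> 0 \<longrightarrow>
          norm (d (complex_of_real \<mu>)) + norm (deriv d (complex_of_real \<mu>))
            + norm (deriv (deriv d) (complex_of_real \<mu>)) \<le> C / (jbr \<mu>)^2))
    \<and> (\<forall>j l. let d = (\<lambda>z. cinv \<alpha> y j l z
              - (if j = l then 4 * complex_of_real pi * \<i> * z / (1 + z^2) else 0)) in
        holo_near_halfline d \<and>
        (\<exists>C. \<forall>\<mu>::real. \<mu> \<ge> 0 \<longrightarrow>
          norm (d (complex_of_real \<mu>)) + norm (deriv d (complex_of_real \<mu>))
            + norm (deriv (deriv d) (complex_of_real \<mu>)) \<le> C / (jbr \<mu>)^2))"
  unfolding Let_def
  by (intro conjI allI cinv_decay[OF inv]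
        cinv_minus_model_decay[OF inv csqrt_model_holomorphic open_one_plus_square_notin_nonpos_Reals
          of_real_image_one_plus_square_notin_nonpos_Reals, where R = 4 and B = "16 * pi"]
        cinv_minus_model_decay[OF inv rational_model_holomorphic open_one_plus_square_notin_nonpos_Reals
          of_real_image_one_plus_square_notin_nonpos_Reals, where R = 4 and B = "16 * pi"])
     (simp_all add: csqrt_model_near_inverse rational_model_near_inverse)

end
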